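(* Let $\kappa$ be a regular cardinal and $G$ a graph. If there exists a cardinal $\lambda<\kappa$ such that $G$ is $(\kappa,\lambda)$-connected, then $K_\kappa$ is a minor of $G$.
   Context: A graph is a pair $(V,E)$ with $E\subseteq[V]^2$. For infinite cardinals $\kappa,\lambda$, a graph is $(\kappa,\lambda)$-connected if after the removal of any set of fewer than $\kappa$ vertices, the number of connected components of the remaining graph is non-zero and less than $\lambda$. $K_\kappa$ is the complete graph on $\kappa$ vertices. A graph $H$ is a minor of $G$ if there are pairwise disjoint non-empty vertex sets $(X_u)_{u\in V_H}$ of $G$, each inducing a connected subgraph, such that for each edge $\{u,v\}$ of $H$ some vertex of $X_u$ is adjacent in $G$ to some vertex of $X_v$. *)

theory Defs
  imports Main
begin

definition graph :: "'v set \<Rightarrow> 'v set set \<Rightarrow> bool" where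
  "graph V E \<longleftrightarrow> E \<subseteq> {{x, y} | x y. x \<noteq> y \<and> x \<in> V \<and> y \<in> V}"

definition adj_in :: "'v set set \<Rightarrow> 'v set \<Rightarrow> 'v \<Rightarrow> 'v \<Rightarrow> bool" where
  "adj_in E X x y \<longleftrightarrow> x \<in> X \<and> y \<in> X \<and> {x, y} \<in> E"

definition connected_in :: "'v set set \<Rightarrow> 'v set \<Rightarrow> bool" where
  "connected_in E X \<longleftrightarrow> X \<noteq> {} \<and> (\<forall>x\<in>X. \<forall>y\<in>X. (adj_in E X)\<^sup>*\<^sup>* x y)"

definition components :: "'v set \<Rightarrow> 'v set set \<Rightarrow> 'v set \<Rightarrow> 'v set set" where
  "components V E S = (V - S) // {(x, y). x \<in> V - S \<and> y \<in> V - S \<and> (adj_in E (V - S))\<^sup>*\<^sup>* x y}"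

text \<open>(kappa,lambda)-connectedness; cardinals are represented by cardinal orders.\<close>
definition kl_connected :: "'v set \<Rightarrow> 'v set set \<Rightarrow> 'k rel \<Rightarrow> 'l rel \<Rightarrow> bool" where
  "kl_connected V E kap lam \<longleftrightarrow>
     (\<forall>S. S \<subseteq> V \<and> (card_of S, kap) \<in> ordLess \<longrightarrow>
        components V E S \<noteq> {} \<and> (card_of (components V E S), lam) \<in> ordLess)"

definition complete_minor :: "'v set \<Rightarrow> 'v set set \<Rightarrow> 'k set \<Rightarrow> bool" where
  "complete_minor V E K \<longleftrightarrow> (\<exists>X :: 'k \<Rightarrow> 'v set.
     (\<forall>u\<in>K. X u \<noteq> {} \<and> X u \<subseteq> V \<and> connected_in E (X u)) \<and>
     (\<forall>u\<in>K. \<forall>v\<in>K. u \<noteq> v \<longrightarrow> X u \<inter> X v = {} \<and> (\<exists>x\<in>X u. \<exists>y\<in>X v. {x, y} \<in> E)))"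

end

theory Submission
  imports Defs
begin

(* Call a vertex set small if it has fewer than kappa vertices. Since kappa is regular, a union of
   fewer than kappa small sets is small; removing a small set leaves fewer than lambda components,
   at least one of which is big.

   First, some big component D of G - S is indivisible: no small T containing S leaves two big
   components of G - T inside D. Otherwise every small U has a small superset T splitting all big
   components of G - U, and a maximal family of such pairs (U, T) that are nested along a chain
   (Zorn) has at least lambda members. For lambda of them, with union U, a fixed vertex e of a big
   component of G - U picks out, for every pair, a component of G - U that is separated from e by T
   but not by the first set of the pair; these components are distinct, contradicting that G - U
   has fewer than lambda components.

   Inside an indivisible D one takes a maximal family of pairwise disjoint and pairwise adjacent
   branch sets (Zorn again). If it had fewer than kappa members, a big component F of G minus their
   union would lie in D; joining F to all of them by finite paths from a common root and then
   adding neighbourhoods inside F until the next layer becomes big yields a small connected X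
   whose neighbourhood in F is big. By indivisibility this neighbourhood meets the unique big
   component inside D of every G - T with small T containing S and X, so X is again a branch set,
   contradicting maximality. *)

unbundle cardinal_syntax

section \<open>Connected vertex sets\<close>

lemma symp_adj_in: "symp (adj_in E A)"
  unfolding adj_in_def by (auto intro: sympI simp: insert_commute)

lemma rtranclp_adj_in_sym: "(adj_in E A)\<^sup>*\<^sup>* x y \<Longrightarrow> (adj_in E A)\<^sup>*\<^sup>* y x"
  by (rule sympD[OF symp_rtranclp[OF symp_adj_in]])

lemma rtranclp_adj_in_mono: "A \<subseteq> B \<Longrightarrow> (adj_in E A)\<^sup>*\<^sup>* x y \<Longrightarrow> (adj_in E B)\<^sup>*\<^sup>* x y"
  by (erule rtranclp_mono[THEN predicate2D, rotated]) (auto simp: adj_in_def)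

lemma connected_inI_root:
  assumes "r \<in> Z" "\<And>x. x \<in> Z \<Longrightarrow> (adj_in E Z)\<^sup>*\<^sup>* r x"
  shows "connected_in E Z"
  unfolding connected_in_def
  using assms rtranclp_adj_in_sym rtranclp_trans by (metis empty_iff)

lemma connected_in_extend:
  assumes Z: "connected_in E Z" and "Z \<subseteq> Z'"
    and nbr: "\<And>x. x \<in> Z' - Z \<Longrightarrow> \<exists>z\<in>Z. {z, x} \<in> E"
  shows "connected_in E Z'"
proof -
  obtain r where r: "r \<in> Z" using Z unfolding connected_in_def by blast
  have Z_reach: "(adj_in E Z')\<^sup>*\<^sup>* r z" if "z \<in> Z" for z
    using Z r that rtranclp_adj_in_mono[OF \<open>Z \<subseteq> Z'\<close>] unfolding connected_in_def by blast
  have "(adj_in E Z')\<^sup>*\<^sup>* r x" if x: "x \<in> Z'" for x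
  proof (cases "x \<in> Z")
    case False
    then obtain z where "z \<in> Z" "{z, x} \<in> E" using nbr x by blast
    then have "adj_in E Z' z x" using x \<open>Z \<subseteq> Z'\<close> unfolding adj_in_def by blast
    with Z_reach[OF \<open>z \<in> Z\<close>] show ?thesis by (rule rtranclp.rtrancl_into_rtrancl)
  qed (rule Z_reach)
  with r \<open>Z \<subseteq> Z'\<close> show ?thesis by (blast intro: connected_inI_root)
qed

lemma connected_in_Union_common_point:
  assumes "\<And>P. P \<in> \<P> \<Longrightarrow> connected_in E P \<and> r \<in> P"
  shows "connected_in E (insert r (\<Union>\<P>))"
proof (rule connected_inI_root)
  fix x assume "x \<in> insert r (\<Union>\<P>)"
  then consider "x = r" | P where "P \<in> \<P>" "x \<in> P" by blast
  then show "(adj_in E (insert r (\<Union>\<P>)))\<^sup>*\<^sup>* r x"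
  proof cases
    case 2
    then have "(adj_in E P)\<^sup>*\<^sup>* r x" using assms unfolding connected_in_def by blast
    then show ?thesis by (rule rtranclp_adj_in_mono[rotated]) (use 2 in blast)
  qed simp
qed simp

lemma finite_connected_path:
  assumes "(adj_in E A)\<^sup>*\<^sup>* a b" "a \<in> A"
  shows "\<exists>P. finite P \<and> a \<in> P \<and> b \<in> P \<and> P \<subseteq> A \<and> connected_in E P"
  using assms
proof (induction rule: rtranclp_induct)
  case base
  have "connected_in E {a}" unfolding connected_in_def by simp
  with base show ?case by blast
next
  case (step y z)
  then obtain P where P: "finite P" "a \<in> P" "y \<in> P" "P \<subseteq> A" "connected_in E P" by blast
  have "connected_in E (insert z P)"
    using P(3) step.hyps(2) unfolding adj_in_def by (intro connected_in_extend[OF P(5)]) auto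
  moreover have "z \<in> A" using step.hyps(2) unfolding adj_in_def by blast
  ultimately show ?case using P by blast
qed

definition neighbourhood_in :: "'v set set \<Rightarrow> 'v set \<Rightarrow> 'v set \<Rightarrow> 'v set" where
  "neighbourhood_in E F X = {v\<in>F. \<exists>x\<in>X. {x, v} \<in> E}"

lemma connected_in_Un_neighbourhood_in:
  "connected_in E X \<Longrightarrow> connected_in E (X \<union> neighbourhood_in E F X)"
  by (rule connected_in_extend) (auto simp: neighbourhood_in_def)

lemma connected_in_subset_UN_neighbourhoods:
  assumes "connected_in E F" "r \<in> Y" "Y \<subseteq> F"
  shows "F \<subseteq> (\<Union>n. ((\<lambda>Z. Z \<union> neighbourhood_in E F Z) ^^ n) Y)"
proof
  fix v assume "v \<in> F"
  with assms have "(adj_in E F)\<^sup>*\<^sup>* r v" unfolding connected_in_def by blast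
  then show "v \<in> (\<Union>n. ((\<lambda>Z. Z \<union> neighbourhood_in E F Z) ^^ n) Y)"
  proof (induction rule: rtranclp_induct)
    case base
    with assms(2) show ?case by (auto intro: exI[of _ 0])
  next
    case (step y z)
    then obtain n where "y \<in> ((\<lambda>Z. Z \<union> neighbourhood_in E F Z) ^^ n) Y" by blast
    with step.hyps(2) have "z \<in> ((\<lambda>Z. Z \<union> neighbourhood_in E F Z) ^^ Suc n) Y"
      unfolding adj_in_def neighbourhood_in_def by auto
    then show ?case by blast
  qed
qed

section \<open>Components\<close>

context
  fixes V :: "'v set" and E :: "'v set set"
begin

definition component_rel :: "'v set \<Rightarrow> ('v \<times> 'v) set" where
  "component_rel S = {(x, y). x \<in> V - S \<and> y \<in> V - S \<and> (adj_in E (V - S))\<^sup>*\<^sup>* x y}"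

lemma components_eq_quotient: "components V E S = (V - S) // component_rel S"
  unfolding components_def component_rel_def ..

lemma equiv_component_rel: "equiv (V - S) (component_rel S)"
proof (rule equivI)
  show "refl_on (V - S) (component_rel S)" unfolding refl_on_def component_rel_def by auto
  show "sym (component_rel S)" unfolding sym_def component_rel_def by (auto intro: rtranclp_adj_in_sym)
  show "trans (component_rel S)" unfolding trans_def component_rel_def
    by (auto intro: rtranclp_trans[of "adj_in E (V - S)"])
  show "component_rel S \<subseteq> (V - S) \<times> (V - S)" unfolding component_rel_def by auto
qed

lemma component_subset: "C \<in> components V E S \<Longrightarrow> C \<subseteq> V - S"
  using in_quotient_imp_subset[OF equiv_component_rel] components_eq_quotient by blast

lemma component_nonempty: "C \<in> components V E S \<Longrightarrow> C \<noteq> {}"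
  using in_quotient_imp_non_empty[OF equiv_component_rel] components_eq_quotient by blast

lemma component_eqI:
  "C1 \<in> components V E S \<Longrightarrow> C2 \<in> components V E S \<Longrightarrow> x \<in> C1 \<Longrightarrow> x \<in> C2 \<Longrightarrow> C1 = C2"
  using quotient_disj[OF equiv_component_rel] components_eq_quotient by blast

lemma component_exists:
  assumes "x \<in> V - S"
  shows "\<exists>C\<in>components V E S. x \<in> C"
proof
  show "component_rel S `` {x} \<in> components V E S"
    using assms by (simp add: components_eq_quotient quotientI)
  show "x \<in> component_rel S `` {x}" using assms unfolding component_rel_def by simp
qed

lemma components_of_V: "components V E V = {}"
  unfolding components_eq_quotient by simp

lemma component_mem_iff:
  assumes "C \<in> components V E S" "x \<in> C"
  shows "y \<in> C \<longleftrightarrow> y \<in> V - S \<and> (adj_in E (V - S))\<^sup>*\<^sup>* x y"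
proof -
  have "C = component_rel S `` {x}"
    using assms components_eq_quotient equiv_class_eq[OF equiv_component_rel]
    by (metis (no_types, lifting) Image_singleton_iff quotientE)
  then show ?thesis using assms unfolding component_rel_def by auto
qed

lemma component_subset_component:
  assumes "S \<subseteq> T" "C \<in> components V E S" "C' \<in> components V E T" "x \<in> C" "x \<in> C'"
  shows "C' \<subseteq> C"
  using assms component_mem_iff rtranclp_adj_in_mono[of "V - T" "V - S"] by blast

lemma connected_in_component:
  assumes C: "C \<in> components V E S"
  shows "connected_in E C"
proof -
  have "(adj_in E C)\<^sup>*\<^sup>* x y" if x: "x \<in> C" and "(adj_in E (V - S))\<^sup>*\<^sup>* x y" for x y
    using that(2)
  proof (induction rule: rtranclp_induct)
    case (step y z)
    then have "y \<in> C" "z \<in> C"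
      using component_mem_iff[OF C x] unfolding adj_in_def by (auto intro: rtranclp.rtrancl_into_rtrancl)
    with step show ?case unfolding adj_in_def by (auto intro: rtranclp.rtrancl_into_rtrancl)
  qed simp
  then show ?thesis
    using component_nonempty[OF C] component_mem_iff[OF C] unfolding connected_in_def by blast
qed

end

section \<open>Small sets\<close>

lemma maximal_pairwise_subset:
  "\<exists>M\<subseteq>A. pairwise R M \<and> (\<forall>x\<in>A - M. \<exists>y\<in>M. \<not> (R x y \<and> R y x))"
proof -
  let ?P = "{M. M \<subseteq> A \<and> pairwise R M}"
  have "\<Union>C \<in> ?P" if "C \<in> chains ?P" for C
  proof -
    have "C \<subseteq> ?P" "chain\<^sub>\<subseteq> C" using that unfolding chains_def by auto
    then show ?thesis using pairwise_chain_Union[of C R] by auto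
  qed
  then obtain M where M: "M \<in> ?P" and max: "\<forall>N\<in>?P. M \<subseteq> N \<longrightarrow> N = M"
    using Zorn_Lemma[of ?P] by blast
  have "\<exists>y\<in>M. \<not> (R x y \<and> R y x)" if x: "x \<in> A - M" for x
  proof (rule ccontr)
    assume "\<not> ?thesis"
    then have "insert x M \<in> ?P" using M x by (auto simp: pairwise_insert)
    with max x show False by blast
  qed
  with M show ?thesis by blast
qed

lemma inj_Field_if_not_ordLess:
  assumes r: "Card_order r" and "\<not> |A| <o r"
  shows "\<exists>g. inj_on g (Field r) \<and> g ` Field r \<subseteq> A"
proof -
  have "Well_order r" using r by (rule card_order_on_well_order_on)
  then have "r \<le>o |A|"
    using not_ordLess_iff_ordLeq[OF \<open>Well_order r\<close> card_of_Well_order[of A]] assms(2) by simp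
  then have "|Field r| \<le>o |A|" by (rule ordIso_ordLeq_trans[OF card_of_Field_ordIso[OF r]])
  then show ?thesis unfolding card_of_ordLeq[symmetric] .
qed

locale regular_cardinal =
  fixes kap :: "'k rel"
  assumes card_order: "Card_order kap"
    and cinfinite: "BNF_Cardinal_Arithmetic.cinfinite kap"
    and regular: "regularCard kap"
begin

abbreviation small :: "'a set \<Rightarrow> bool" where "small A \<equiv> |A| <o kap"

lemma small_subset: "small B \<Longrightarrow> A \<subseteq> B \<Longrightarrow> small A"
  using card_of_mono1 ordLeq_ordLess_trans by blast

lemma small_Un: "small A \<Longrightarrow> small B \<Longrightarrow> small (A \<union> B)"
  using card_of_Un_ordLess_infinite_Field card_order cinfinite unfolding cinfinite_def by blast

lemma small_UN: "small I \<Longrightarrow> (\<And>i. i \<in> I \<Longrightarrow> small (A i)) \<Longrightarrow> small (\<Union>i\<in>I. A i)"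
  using card_of_UNION_ordLess_infinite_Field_regularCard regular card_order cinfinite by blast

lemma small_Union: "small I \<Longrightarrow> (\<And>X. X \<in> I \<Longrightarrow> small X) \<Longrightarrow> small (\<Union>I)"
  using small_UN[of I "\<lambda>X. X"] by simp

lemma finite_small: "finite A \<Longrightarrow> small A"
  using finite_ordLess_infinite[of "|A|" kap] card_order cinfinite unfolding cinfinite_def
  by (simp add: card_of_well_order_on card_order_on_well_order_on Field_card_of)

lemma small_insert: "small A \<Longrightarrow> small (insert a A)"
  using small_Un[of "{a}" A] finite_small[of "{a}"] by simp

lemma not_small_Diff: "\<not> small A \<Longrightarrow> small B \<Longrightarrow> \<not> small (A - B)"
  using small_Un[of "A - B" B] small_subset[of "A - B \<union> B" A] by auto

lemma not_small_nonempty: "\<not> small A \<Longrightarrow> A \<noteq> {}"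
  using finite_small by auto

end

locale kl_connected_graph = regular_cardinal kap for kap :: "'k rel" +
  fixes V :: "'v set" and E :: "'v set set" and lam :: "'k rel"
  assumes card_order_lam: "Card_order lam"
    and cinfinite_lam: "BNF_Cardinal_Arithmetic.cinfinite lam"
    and lam_less_kap: "lam <o kap"
    and kl_connected: "kl_connected V E kap lam"
begin

abbreviation comps :: "'v set \<Rightarrow> 'v set set" where "comps S \<equiv> components V E S"

lemma components_bounds: "S \<subseteq> V \<Longrightarrow> small S \<Longrightarrow> comps S \<noteq> {} \<and> |comps S| <o lam"
  using kl_connected unfolding kl_connected_def by blast

lemma small_if_ordLess_lam: "|A| <o lam \<Longrightarrow> small A"
  using lam_less_kap ordLess_transitive by blast

lemma small_components: "S \<subseteq> V \<Longrightarrow> small S \<Longrightarrow> small (comps S)"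
  using components_bounds small_if_ordLess_lam by blast

(* The only use of lambda being infinite: it makes kappa uncountable. *)
lemma small_UNIV_nat: "small (UNIV :: nat set)"
proof -
  have "natLeq \<le>o lam" using natLeq_ordLeq_cinfinite card_order_lam cinfinite_lam by blast
  then have "natLeq <o kap" using lam_less_kap ordLeq_ordLess_trans by blast
  then show ?thesis using card_of_nat ordIso_ordLess_trans by blast
qed

lemma not_small_complement: "S \<subseteq> V \<Longrightarrow> small S \<Longrightarrow> \<not> small (V - S)"
  using components_bounds[of V] components_of_V small_Un[of S "V - S"] by (auto simp: Un_absorb1)

lemma big_component_meets:
  assumes T: "T \<subseteq> V" "small T" and Y: "Y \<subseteq> V - T" "\<not> small Y"
  shows "\<exists>C\<in>comps T. \<not> small C \<and> C \<inter> Y \<noteq> {}"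
proof (rule ccontr)
  let ?\<C> = "{C\<in>comps T. C \<inter> Y \<noteq> {}}"
  assume "\<not> ?thesis"
  then have "\<And>C. C \<in> ?\<C> \<Longrightarrow> small C" by blast
  moreover have "small ?\<C>" using small_components[OF T] by (rule small_subset) blast
  ultimately have "small (\<Union>?\<C>)" by (intro small_Union)
  moreover have "Y \<subseteq> \<Union>?\<C>"
  proof
    fix y assume "y \<in> Y"
    with Y(1) obtain C where "C \<in> comps T" "y \<in> C" using component_exists[of y V T E] by blast
    with \<open>y \<in> Y\<close> show "y \<in> \<Union>?\<C>" by blast
  qed
  ultimately show False using Y(2) small_subset by blast
qed

lemma big_component_exists:
  assumes "U \<subseteq> V" "small U"
  shows "\<exists>C\<in>comps U. \<not> small C"
  using big_component_meets[OF assms order_refl not_small_complement[OF assms]] by blast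

lemma big_component_refine:
  assumes "S \<subseteq> T" "T \<subseteq> V" "small T" "C \<in> comps S" "\<not> small C"
  shows "\<exists>C'\<in>comps T. C' \<subseteq> C \<and> \<not> small C'"
proof -
  have "C - T \<subseteq> V - T" using component_subset[OF assms(4)] by blast
  from big_component_meets[OF assms(2,3) this not_small_Diff[OF assms(5,3)]]
  obtain C' where C': "C' \<in> comps T" "\<not> small C'" "C' \<inter> (C - T) \<noteq> {}"
    by (elim bexE conjE) (rule that)
  then have "C' \<subseteq> C" using component_subset_component[OF assms(1,4) C'(1)] by blast
  with C' show ?thesis by blast
qed

section \<open>An indivisible big component\<close>

definition separates :: "'v set \<Rightarrow> 'v set \<Rightarrow> bool" where
  "separates T D \<longleftrightarrow>
     (\<exists>C1\<in>comps T. \<exists>C2\<in>comps T. C1 \<noteq> C2 \<and> C1 \<subseteq> D \<and> C2 \<subseteq> D \<and> \<not> small C1 \<and> \<not> small C2)"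

definition splits :: "'v set \<Rightarrow> 'v set \<Rightarrow> bool" where
  "splits U T \<longleftrightarrow> (\<forall>C\<in>comps U. \<not> small C \<longrightarrow> separates T C)"

definition indivisible :: "'v set \<Rightarrow> 'v set \<Rightarrow> bool" where
  "indivisible S D \<longleftrightarrow> (\<forall>T. S \<subseteq> T \<longrightarrow> T \<subseteq> V \<longrightarrow> small T \<longrightarrow> \<not> separates T D)"

lemma separatesI:
  "C1 \<in> comps T \<Longrightarrow> C2 \<in> comps T \<Longrightarrow> C1 \<noteq> C2 \<Longrightarrow> C1 \<subseteq> D \<Longrightarrow> C2 \<subseteq> D \<Longrightarrow>
    \<not> small C1 \<Longrightarrow> \<not> small C2 \<Longrightarrow> separates T D"
  unfolding separates_def by blast

lemma separatesE:
  assumes "separates T D"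
  obtains C1 C2 where "C1 \<in> comps T" "C2 \<in> comps T" "C1 \<noteq> C2" "C1 \<subseteq> D" "C2 \<subseteq> D"
    "\<not> small C1" "\<not> small C2"
  using assms unfolding separates_def by blast

lemma separates_mono:
  assumes "separates T D" "T \<subseteq> T'" "T' \<subseteq> V" "small T'"
  shows "separates T' D"
proof -
  obtain C1 C2 where C12: "C1 \<in> comps T" "C2 \<in> comps T" "C1 \<noteq> C2" "C1 \<subseteq> D" "C2 \<subseteq> D"
    "\<not> small C1" "\<not> small C2"
    using assms(1) by (rule separatesE)
  obtain D1 where D1: "D1 \<in> comps T'" "D1 \<subseteq> C1" "\<not> small D1"
    using big_component_refine[OF assms(2-4) C12(1,6)] by blast
  obtain D2 where D2: "D2 \<in> comps T'" "D2 \<subseteq> C2" "\<not> small D2"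
    using big_component_refine[OF assms(2-4) C12(2,7)] by blast
  have "D1 \<noteq> D2"
  proof
    assume "D1 = D2"
    obtain x where "x \<in> D1" using not_small_nonempty[OF D1(3)] by blast
    with \<open>D1 = D2\<close> D1(2) D2(2) have "x \<in> C1" "x \<in> C2" by auto
    with component_eqI[OF C12(1,2)] C12(3) show False by blast
  qed
  with D1 D2 C12(4,5) show ?thesis by (intro separatesI[of D1 T' D2]) auto
qed

lemma not_separates_component:
  assumes "C \<in> comps U"
  shows "\<not> separates U C"
proof
  assume "separates U C"
  then obtain C1 C2 where C12: "C1 \<in> comps U" "C2 \<in> comps U" "C1 \<noteq> C2" "C1 \<subseteq> C" "C2 \<subseteq> C"
    by (rule separatesE)
  have "C1 = C" "C2 = C"
    using component_eqI[OF C12(1) assms] component_eqI[OF C12(2) assms] C12(4,5)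
      component_nonempty[OF C12(1)] component_nonempty[OF C12(2)] by blast+
  with C12(3) show False by simp
qed

lemma not_splits_self:
  assumes "U \<subseteq> V" "small U"
  shows "\<not> splits U U"
  using big_component_exists[OF assms] not_separates_component unfolding splits_def by blast

lemma splitting_superset_exists:
  assumes divisible: "\<And>U C. U \<subseteq> V \<Longrightarrow> small U \<Longrightarrow> C \<in> comps U \<Longrightarrow> \<not> small C \<Longrightarrow> \<not> indivisible U C"
    and U: "U \<subseteq> V" "small U"
  shows "\<exists>T. U \<subseteq> T \<and> T \<subseteq> V \<and> small T \<and> splits U T"
proof -
  define B where "B = {C\<in>comps U. \<not> small C}"
  have "\<forall>C\<in>B. \<exists>T. U \<subseteq> T \<and> T \<subseteq> V \<and> small T \<and> separates T C"
    using divisible[OF U] unfolding B_def indivisible_def by blast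
  then obtain f where f: "\<forall>C\<in>B. U \<subseteq> f C \<and> f C \<subseteq> V \<and> small (f C) \<and> separates (f C) C"
    by (rule bchoice[THEN exE])
  define T where "T = U \<union> (\<Union>C\<in>B. f C)"
  have "small B" unfolding B_def by (rule small_subset[OF small_components[OF U]]) blast
  then have T: "U \<subseteq> T" "T \<subseteq> V" "small T"
    unfolding T_def using U f by (blast, blast, intro small_Un small_UN) auto
  have "separates T C" if "C \<in> B" for C
    using f that T by (intro separates_mono[of "f C" C T]) (auto simp: T_def)
  with T show ?thesis unfolding splits_def B_def by blast
qed

definition splitting_pair :: "'v set \<times> 'v set \<Rightarrow> bool" where
  "splitting_pair p \<longleftrightarrow> fst p \<subseteq> snd p \<and> snd p \<subseteq> V \<and> small (snd p) \<and> splits (fst p) (snd p)"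

definition nested :: "'v set \<times> 'v set \<Rightarrow> 'v set \<times> 'v set \<Rightarrow> bool" where
  "nested p q \<longleftrightarrow> snd p \<subseteq> fst q \<or> snd q \<subseteq> fst p"

lemma splitting_family_Union:
  assumes "\<forall>p\<in>M. splitting_pair p" "small M"
  shows "\<Union>(snd ` M) \<subseteq> V" "small (\<Union>(snd ` M))"
  using assms unfolding splitting_pair_def by (blast, intro small_UN) auto

lemma component_avoiding_point:
  assumes p: "splitting_pair p" and U: "snd p \<subseteq> U" "U \<subseteq> V" "small U"
    and e: "E0 \<in> comps U" "\<not> small E0" "e \<in> E0"
  shows "\<exists>c. c \<in> comps U \<and> (\<exists>A\<in>comps (fst p). \<exists>B\<in>comps (snd p). e \<in> A \<and> e \<notin> B \<and> c \<subseteq> A \<and> c \<subseteq> B)"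
proof -
  have p': "fst p \<subseteq> U" "splits (fst p) (snd p)" using p U(1) unfolding splitting_pair_def by auto
  have "e \<in> V - U" using component_subset[OF e(1)] e(3) by blast
  then have "e \<in> V - fst p" using p'(1) by blast
  from component_exists[OF this] obtain A where A: "A \<in> comps (fst p)" "e \<in> A" by blast
  have "E0 \<subseteq> A" by (rule component_subset_component[OF p'(1) A(1) e(1) A(2) e(3)])
  then have "\<not> small A" using e(2) small_subset by blast
  with p'(2) A(1) have "separates (snd p) A" unfolding splits_def by blast
  then obtain C1 C2 where C12: "C1 \<in> comps (snd p)" "C2 \<in> comps (snd p)" "C1 \<noteq> C2"
    "C1 \<subseteq> A" "C2 \<subseteq> A" "\<not> small C1" "\<not> small C2"
    by (rule separatesE)
  obtain B where B: "B \<in> comps (snd p)" "\<not> small B" "B \<subseteq> A" "e \<notin> B"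
  proof (cases "e \<in> C1")
    case True
    then have "e \<notin> C2" using component_eqI[OF C12(1,2)] C12(3) by blast
    with C12 show ?thesis by (intro that[of C2]) auto
  next
    case False
    with C12 show ?thesis by (intro that[of C1]) auto
  qed
  obtain v where v: "v \<in> B - U" using not_small_nonempty[OF not_small_Diff[OF B(2) U(3)]] by blast
  then have "v \<in> V - U" using component_subset[OF B(1)] by blast
  from component_exists[OF this] obtain c where c: "c \<in> comps U" "v \<in> c" by blast
  have "c \<subseteq> B" using component_subset_component[OF U(1) B(1) c(1)] v c(2) by blast
  with c A B show ?thesis by blast
qed

lemma small_nested_splitting_family_ordLess:
  assumes M: "\<forall>p\<in>M. splitting_pair p" "pairwise nested M" "small M"
  shows "|M| <o lam"
proof -
  define U where "U = \<Union>(snd ` M)"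
  have U: "U \<subseteq> V" "small U" unfolding U_def using splitting_family_Union[OF M(1,3)] by auto
  obtain E0 where E0: "E0 \<in> comps U" "\<not> small E0" using big_component_exists[OF U] by blast
  obtain e where e: "e \<in> E0" using not_small_nonempty[OF E0(2)] by blast
  have "\<forall>p\<in>M. \<exists>c. c \<in> comps U \<and>
      (\<exists>A\<in>comps (fst p). \<exists>B\<in>comps (snd p). e \<in> A \<and> e \<notin> B \<and> c \<subseteq> A \<and> c \<subseteq> B)"
    using component_avoiding_point[OF _ _ U E0 e] M(1) unfolding U_def by blast
  then obtain h where h: "\<forall>p\<in>M. h p \<in> comps U \<and>
      (\<exists>A\<in>comps (fst p). \<exists>B\<in>comps (snd p). e \<in> A \<and> e \<notin> B \<and> h p \<subseteq> A \<and> h p \<subseteq> B)"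
    by (rule bchoice[THEN exE])
  \<comment> \<open>h q lies in the component of G - snd p through e, whereas h p lies in another one\<close>
  have h_differs: "h p \<noteq> h q" if pq: "p \<in> M" "q \<in> M" "snd p \<subseteq> fst q" for p q
  proof
    assume "h p = h q"
    obtain B where B: "B \<in> comps (snd p)" "e \<notin> B" "h p \<subseteq> B" using h pq(1) by blast
    obtain A where A: "A \<in> comps (fst q)" "e \<in> A" "h q \<subseteq> A" using h pq(2) by blast
    have "e \<in> V - snd p" using component_subset[OF E0(1)] e pq(1) unfolding U_def by blast
    from component_exists[OF this] obtain K where K: "K \<in> comps (snd p)" "e \<in> K" by blast
    have "A \<subseteq> K" by (rule component_subset_component[OF pq(3) K(1) A(1) K(2) A(2)])
    obtain x where "x \<in> h p" using component_nonempty h pq(1) by blast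
    with \<open>h p = h q\<close> A(3) B(3) \<open>A \<subseteq> K\<close> have "x \<in> B" "x \<in> K" by auto
    with component_eqI[OF B(1) K(1)] B(2) K(2) show False by blast
  qed
  have "inj_on h M"
  proof (rule inj_onI, rule ccontr)
    fix p q assume "p \<in> M" "q \<in> M" "h p = h q" "p \<noteq> q"
    with M(2) h_differs show False unfolding pairwise_def nested_def by metis
  qed
  moreover have "h ` M \<subseteq> comps U" using h by blast
  ultimately have "|M| \<le>o |comps U|" unfolding card_of_ordLeq[symmetric] by blast
  with components_bounds[OF U] show ?thesis using ordLeq_ordLess_trans by blast
qed

lemma nested_splitting_family_ordLess:
  assumes M: "\<forall>p\<in>M. splitting_pair p" "pairwise nested M"
  shows "|M| <o lam"
proof (rule ccontr)
  assume "\<not> |M| <o lam"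
  then obtain g where g: "inj_on g (Field lam)" "g ` Field lam \<subseteq> M"
    using inj_Field_if_not_ordLess[OF card_order_lam] by blast
  define M' where "M' = g ` Field lam"
  have "|Field lam| \<le>o |M'|" using g(1) unfolding M'_def card_of_ordLeq[symmetric] by blast
  then have lam_le: "lam \<le>o |M'|"
    using card_of_Field_ordIso[OF card_order_lam] ordIso_ordLeq_trans ordIso_symmetric by blast
  have "|M'| \<le>o lam"
    using card_of_image[of g "Field lam"] card_of_Field_ordIso[OF card_order_lam] ordLeq_ordIso_trans
    unfolding M'_def by blast
  then have "small M'" using lam_less_kap by (rule ordLeq_ordLess_trans)
  moreover have "\<forall>p\<in>M'. splitting_pair p" "pairwise nested M'"
    using M g(2) pairwise_subset[OF M(2)] unfolding M'_def by auto
  ultimately have "|M'| <o lam" using small_nested_splitting_family_ordLess by blast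
  with lam_le show False using not_ordLess_ordLeq by blast
qed

lemma indivisible_component_exists:
  "\<exists>S D. S \<subseteq> V \<and> small S \<and> D \<in> comps S \<and> \<not> small D \<and> indivisible S D"
proof (rule ccontr)
  assume "\<not> ?thesis"
  then have divisible: "\<And>U C. U \<subseteq> V \<Longrightarrow> small U \<Longrightarrow> C \<in> comps U \<Longrightarrow> \<not> small C \<Longrightarrow> \<not> indivisible U C"
    by blast
  obtain M where M: "M \<subseteq> {p. splitting_pair p}" "pairwise nested M"
    and max: "\<forall>x\<in>{p. splitting_pair p} - M. \<exists>y\<in>M. \<not> (nested x y \<and> nested y x)"
    using maximal_pairwise_subset[of "{p. splitting_pair p}" nested] by blast
  define U where "U = \<Union>(snd ` M)"
  have pairs: "\<forall>p\<in>M. splitting_pair p" using M(1) by blast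
  then have "small M" using nested_splitting_family_ordLess[OF _ M(2)] small_if_ordLess_lam by blast
  with pairs have U: "U \<subseteq> V" "small U" unfolding U_def by (rule splitting_family_Union)+
  obtain T where T: "U \<subseteq> T" "T \<subseteq> V" "small T" "splits U T"
    using splitting_superset_exists[OF divisible U] by blast
  have "splitting_pair (U, T)" unfolding splitting_pair_def using T by simp
  moreover have "(U, T) \<notin> M"
  proof
    assume "(U, T) \<in> M"
    then have "T = U" using T(1) unfolding U_def by force
    with T(4) not_splits_self[OF U] show False by simp
  qed
  moreover have "nested (U, T) q \<and> nested q (U, T)" if "q \<in> M" for q
    using that unfolding nested_def U_def by auto
  ultimately show False using max by blast
qed

section \<open>Branch sets\<close>

lemma small_connected_with_big_neighbourhood:
  assumes F: "connected_in E F" "\<not> small F" and Y: "Y \<subseteq> F" "small Y" "connected_in E Y"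
  shows "\<exists>X. Y \<subseteq> X \<and> X \<subseteq> F \<and> small X \<and> connected_in E X \<and> \<not> small (neighbourhood_in E F X)"
proof -
  define Z where "Z n = ((\<lambda>Z. Z \<union> neighbourhood_in E F Z) ^^ n) Y" for n
  have Z_0: "Z 0 = Y" and Z_Suc: "Z (Suc n) = Z n \<union> neighbourhood_in E F (Z n)" for n
    unfolding Z_def by simp_all
  have Z: "Y \<subseteq> Z n \<and> Z n \<subseteq> F \<and> connected_in E (Z n)" for n
  proof (induction n)
    case (Suc n)
    then show ?case
      unfolding Z_Suc using connected_in_Un_neighbourhood_in by (auto simp: neighbourhood_in_def)
  qed (use Y in \<open>simp add: Z_0\<close>)
  have "\<exists>n. small (Z n) \<and> \<not> small (Z (Suc n))"
  proof (rule ccontr)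
    assume "\<not> ?thesis"
    then have "small (Z n)" for n by (induction n) (auto simp: Z_0 Y(2))
    then have "small (\<Union>n. Z n)" by (intro small_UN[OF small_UNIV_nat])
    moreover obtain r where "r \<in> Y" using Y(3) unfolding connected_in_def by blast
    then have "F \<subseteq> (\<Union>n. Z n)"
      unfolding Z_def by (rule connected_in_subset_UN_neighbourhoods[OF F(1) _ Y(1)])
    ultimately show False using F(2) small_subset by blast
  qed
  then obtain n where n: "small (Z n)" "\<not> small (Z (Suc n))" by blast
  then have "\<not> small (neighbourhood_in E F (Z n))" unfolding Z_Suc using small_Un by blast
  with n(1) Z show ?thesis by blast
qed

lemma small_connected_hub:
  assumes F: "connected_in E F" and \<F>: "small \<F>" "\<forall>Y\<in>\<F>. \<exists>x\<in>Y. \<exists>y\<in>F. {x, y} \<in> E"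
  shows "\<exists>H. H \<subseteq> F \<and> small H \<and> connected_in E H \<and> (\<forall>Y\<in>\<F>. \<exists>x\<in>Y. \<exists>y\<in>H. {x, y} \<in> E)"
proof -
  obtain r where r: "r \<in> F" using F unfolding connected_in_def by blast
  have "\<forall>Y\<in>\<F>. \<exists>P. finite P \<and> r \<in> P \<and> P \<subseteq> F \<and> connected_in E P \<and> (\<exists>x\<in>Y. \<exists>y\<in>P. {x, y} \<in> E)"
  proof
    fix Y assume "Y \<in> \<F>"
    with \<F>(2) obtain x y where xy: "x \<in> Y" "y \<in> F" "{x, y} \<in> E" by blast
    with F r have "(adj_in E F)\<^sup>*\<^sup>* r y" unfolding connected_in_def by blast
    from finite_connected_path[OF this r] xy
    show "\<exists>P. finite P \<and> r \<in> P \<and> P \<subseteq> F \<and> connected_in E P \<and> (\<exists>x\<in>Y. \<exists>y\<in>P. {x, y} \<in> E)"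
      by blast
  qed
  then obtain P where P: "\<forall>Y\<in>\<F>. finite (P Y) \<and> r \<in> P Y \<and> P Y \<subseteq> F \<and> connected_in E (P Y) \<and>
      (\<exists>x\<in>Y. \<exists>y\<in>P Y. {x, y} \<in> E)"
    by (rule bchoice[THEN exE])
  define H where "H = insert r (\<Union>(P ` \<F>))"
  have "connected_in E H" unfolding H_def using P by (intro connected_in_Union_common_point) blast
  moreover have "small H"
    unfolding H_def using P by (intro small_insert small_UN[OF \<F>(1)] finite_small) blast
  moreover have "H \<subseteq> F" unfolding H_def using P r by blast
  moreover have "\<exists>x\<in>Y. \<exists>y\<in>H. {x, y} \<in> E" if "Y \<in> \<F>" for Y
  proof -
    have "P Y \<subseteq> H" unfolding H_def using that by blast
    moreover have "\<exists>x\<in>Y. \<exists>y\<in>P Y. {x, y} \<in> E" using bspec[OF P that] by simp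
    ultimately show ?thesis by blast
  qed
  ultimately show ?thesis by (intro exI[of _ H]) simp
qed

(* The last clause makes every branch set that is built later, inside a big component of G minus
   the earlier ones, adjacent to X. *)
definition branch_set :: "'v set \<Rightarrow> 'v set \<Rightarrow> 'v set \<Rightarrow> bool" where
  "branch_set S D X \<longleftrightarrow> X \<subseteq> V - S \<and> connected_in E X \<and> small X \<and>
     (\<forall>T F. S \<union> X \<subseteq> T \<longrightarrow> T \<subseteq> V \<longrightarrow> small T \<longrightarrow> F \<in> comps T \<longrightarrow> F \<subseteq> D \<longrightarrow> \<not> small F \<longrightarrow>
        (\<exists>x\<in>X. \<exists>y\<in>F. {x, y} \<in> E))"

lemma branch_setD:
  assumes "branch_set S D X"
  shows "X \<subseteq> V - S" "connected_in E X" "small X"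
    and "S \<union> X \<subseteq> T \<Longrightarrow> T \<subseteq> V \<Longrightarrow> small T \<Longrightarrow> F \<in> comps T \<Longrightarrow> F \<subseteq> D \<Longrightarrow> \<not> small F \<Longrightarrow>
      \<exists>x\<in>X. \<exists>y\<in>F. {x, y} \<in> E"
  using assms unfolding branch_set_def by blast+

lemma branch_setI:
  assumes D: "D \<in> comps S" "indivisible S D" and W: "S \<subseteq> W" "W \<subseteq> V" "small W"
    and F: "F \<in> comps W" "F \<subseteq> D"
    and X: "X \<subseteq> F" "small X" "connected_in E X" "\<not> small (neighbourhood_in E F X)"
  shows "branch_set S D X"
  unfolding branch_set_def
proof (intro conjI allI impI)
  show "X \<subseteq> V - S" using X(1) component_subset[OF F(1)] W(1) by blast
  show "connected_in E X" "small X" by (fact X(3), fact X(2))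
  fix T F' assume T: "S \<union> X \<subseteq> T" "T \<subseteq> V" "small T" "F' \<in> comps T" "F' \<subseteq> D" "\<not> small F'"
  let ?N = "neighbourhood_in E F X"
  have TW: "T \<subseteq> T \<union> W" "T \<union> W \<subseteq> V" "small (T \<union> W)" using T(2,3) W(2,3) by (auto intro: small_Un)
  have "?N - (T \<union> W) \<subseteq> V - (T \<union> W)"
    using component_subset[OF F(1)] unfolding neighbourhood_in_def by blast
  from big_component_meets[OF TW(2,3) this not_small_Diff[OF X(4) TW(3)]]
  obtain C v where C: "C \<in> comps (T \<union> W)" "\<not> small C" "v \<in> C" and v: "v \<in> ?N" "v \<notin> T \<union> W"
    by blast
  \<comment> \<open>the big component of G - T through v lies in D, so by indivisibility it is F'\<close>
  have "v \<in> V - T" using v component_subset[OF F(1)] unfolding neighbourhood_in_def by blast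
  from component_exists[OF this] obtain K where K: "K \<in> comps T" "v \<in> K" by blast
  have "C \<subseteq> K" by (rule component_subset_component[OF TW(1) K(1) C(1) K(2) C(3)])
  then have "\<not> small K" using C(2) small_subset by blast
  have "v \<in> D" using v(1) F(2) unfolding neighbourhood_in_def by blast
  have "S \<subseteq> T" using T(1) by blast
  then have "K \<subseteq> D" using component_subset_component[OF _ D(1) K(1) \<open>v \<in> D\<close> K(2)] by blast
  have "K = F'"
  proof (rule ccontr)
    assume "K \<noteq> F'"
    then have "separates T D"
      using separatesI[OF K(1) T(4) _ \<open>K \<subseteq> D\<close> T(5) \<open>\<not> small K\<close> T(6)] by blast
    with D(2) \<open>S \<subseteq> T\<close> T(2,3) show False unfolding indivisible_def by blast
  qed
  with K(2) v(1) show "\<exists>x\<in>X. \<exists>y\<in>F'. {x, y} \<in> E" unfolding neighbourhood_in_def by blast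
qed

lemma branch_set_extension:
  assumes S: "S \<subseteq> V" "small S" and D: "D \<in> comps S" "\<not> small D" "indivisible S D"
    and \<F>: "\<forall>X\<in>\<F>. branch_set S D X" "small \<F>"
  shows "\<exists>X. branch_set S D X \<and> X \<inter> \<Union>\<F> = {} \<and> (\<forall>Y\<in>\<F>. \<exists>x\<in>Y. \<exists>y\<in>X. {x, y} \<in> E)"
proof -
  define W where "W = S \<union> \<Union>\<F>"
  have "X \<subseteq> V - S" "small X" if "X \<in> \<F>" for X
    using \<F>(1) that by (blast dest: branch_setD(1), blast dest: branch_setD(3))
  with S \<F>(2) have W: "S \<subseteq> W" "W \<subseteq> V" "small W"
    unfolding W_def by (blast, blast, intro small_Un small_Union) auto
  obtain F where F: "F \<in> comps W" "F \<subseteq> D" "\<not> small F"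
    using big_component_refine[OF W D(1,2)] by blast
  have "\<forall>Y\<in>\<F>. \<exists>x\<in>Y. \<exists>y\<in>F. {x, y} \<in> E"
  proof
    fix Y assume "Y \<in> \<F>"
    then have "S \<union> Y \<subseteq> W" unfolding W_def by blast
    moreover have "branch_set S D Y" using \<F>(1) \<open>Y \<in> \<F>\<close> by blast
    ultimately show "\<exists>x\<in>Y. \<exists>y\<in>F. {x, y} \<in> E" using branch_setD(4)[OF _ _ W(2,3) F] by blast
  qed
  with small_connected_hub[OF connected_in_component[OF F(1)] \<F>(2)]
  obtain H where H: "H \<subseteq> F" "small H" "connected_in E H" "\<forall>Y\<in>\<F>. \<exists>x\<in>Y. \<exists>y\<in>H. {x, y} \<in> E"
    by blast
  obtain X where X: "H \<subseteq> X" "X \<subseteq> F" "small X" "connected_in E X" "\<not> small (neighbourhood_in E F X)"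
    using small_connected_with_big_neighbourhood[OF connected_in_component[OF F(1)] F(3) H(1-3)] by blast
  have "branch_set S D X" by (rule branch_setI[OF D(1,3) W F(1,2) X(2-5)])
  moreover have "X \<inter> \<Union>\<F> = {}" using X(2) component_subset[OF F(1)] unfolding W_def by blast
  moreover have "\<forall>Y\<in>\<F>. \<exists>x\<in>Y. \<exists>y\<in>X. {x, y} \<in> E" using H(4) X(1) by blast
  ultimately show ?thesis by blast
qed

lemma complete_minor_if_indivisible:
  assumes "S \<subseteq> V" "small S" "D \<in> comps S" "\<not> small D" "indivisible S D"
  shows "complete_minor V E (Field kap)"
proof -
  define touching where "touching X Y \<longleftrightarrow> X \<inter> Y = {} \<and> (\<exists>x\<in>X. \<exists>y\<in>Y. {x, y} \<in> E)" for X Y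
  obtain \<F> where \<F>: "\<F> \<subseteq> {X. branch_set S D X}" "pairwise touching \<F>"
    and max: "\<forall>X\<in>{X. branch_set S D X} - \<F>. \<exists>Y\<in>\<F>. \<not> (touching X Y \<and> touching Y X)"
    using maximal_pairwise_subset[of "{X. branch_set S D X}" touching] by blast
  have "\<not> small \<F>"
  proof
    assume "small \<F>"
    have "\<forall>X\<in>\<F>. branch_set S D X" using \<F>(1) by blast
    from branch_set_extension[OF assms this \<open>small \<F>\<close>]
    obtain X where X: "branch_set S D X" "X \<inter> \<Union>\<F> = {}" "\<forall>Y\<in>\<F>. \<exists>x\<in>Y. \<exists>y\<in>X. {x, y} \<in> E"
      by blast
    have "X \<noteq> {}" using branch_setD(2)[OF X(1)] unfolding connected_in_def by blast
    with X(2) have "X \<notin> \<F>" by blast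
    moreover have "touching X Y \<and> touching Y X" if Y: "Y \<in> \<F>" for Y
    proof -
      obtain x y where xy: "x \<in> Y" "y \<in> X" "{x, y} \<in> E" using X(3) Y by blast
      then have "{y, x} \<in> E" by (simp add: insert_commute)
      with xy X(2) Y show ?thesis unfolding touching_def by blast
    qed
    ultimately show False using max X(1) by blast
  qed
  then obtain g where g: "inj_on g (Field kap)" "g ` Field kap \<subseteq> \<F>"
    using inj_Field_if_not_ordLess[OF card_order] by blast
  show ?thesis unfolding complete_minor_def
  proof (intro exI[of _ g] conjI ballI impI)
    fix u assume "u \<in> Field kap"
    with g(2) \<F>(1) have "branch_set S D (g u)" by blast
    from branch_setD(1,2)[OF this] show "g u \<noteq> {}" "g u \<subseteq> V" "connected_in E (g u)"
      unfolding connected_in_def by auto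
  next
    fix u v assume uv: "u \<in> Field kap" "v \<in> Field kap" "u \<noteq> v"
    then have "g u \<noteq> g v" using inj_on_eq_iff[OF g(1)] by simp
    with uv g(2) have "touching (g u) (g v)" by (intro pairwiseD(1)[OF \<F>(2)]) auto
    then show "g u \<inter> g v = {}" "\<exists>x\<in>g u. \<exists>y\<in>g v. {x, y} \<in> E" unfolding touching_def by blast+
  qed
qed

end

theorem mainTheorem9:
  fixes V :: "'v set" and E :: "'v set set" and kap :: "'k rel"
  assumes "graph V E"
    and "Card_order kap" and "BNF_Cardinal_Arithmetic.cinfinite kap" and "regularCard kap"
    and "\<exists>lam :: 'k rel. Card_order lam \<and> BNF_Cardinal_Arithmetic.cinfinite lam \<and> (lam, kap) \<in> ordLess \<and> kl_connected V E kap lam"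
  shows "complete_minor V E (Field kap)"
proof -
  obtain lam :: "'k rel" where lam: "Card_order lam" "BNF_Cardinal_Arithmetic.cinfinite lam"
    "lam <o kap" "kl_connected V E kap lam"
    using assms(5) by blast
  interpret kl_connected_graph kap V E lam
    using assms(2-4) lam by unfold_locales
  obtain S D where "S \<subseteq> V" "small S" "D \<in> comps S" "\<not> small D" "indivisible S D"
    using indivisible_component_exists by blast
  then show ?thesis by (rule complete_minor_if_indivisible)
qed

end
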